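(* Let $n,m\in\mathbb{N}$, $p\in(0,1]$, and let $f$ be a score function single-peaked at $p$. Let $\eta\in\mathbb{N}$. If there exists a set of static documents $T\subseteq D$ with $|T|=\eta$ such that the corpus-enriched game $G_T=\langle n,m,p,T\rangle$ has a pure equilibrium, then there exists a threshold vector $\vec t\in[0,1]^m$ with $\|\vec t\|_1=\sum_{j=1}^m \vec t_j\le \eta$ such that the ranking game with thresholds $G_{\vec t}=\langle n,m,p,\vec t\rangle$ has a pure equilibrium.
   Context: Setting: $n$ players (publishers), $m$ queries $q_1,\dots,q_m$, a peak value $p\in(0,1]$ and a score function $f:[0,1]\to[0,1]$ single-peaked at $p$ ($p$ is the unique point such that $f$ is non-decreasing on $[0,p]$ and non-increasing on $[p,1]$). Each player $i$ chooses a document $d_i\in D=\{d=(d^1,\dots,d^m)\in[0,1]^m:\sum_j d^j\le 1\}$; its score for $q_j$ is $f(d_i^j)$. A strategy profile is $s=(d_1,\dots,d_n)$. Each winner of a query shares it uniformly: if $q_j$ has $h_j$ winners each gets $1/h_j$; a player's utility is the sum of its shares over queries. Corpus-enriched game $G_T=\langle n,m,p,T\rangle$: $T\subseteq D$ is a finite set of static (dummy) documents; a player's document can be top-ranked for $q_j$ only if its score is at least $\max_{d\in T}f(d^j)$ (ties with static documents are broken in favour of players); among such player documents, those of highest score are the winners of $q_j$; if none, no player wins $q_j$. Ranking game with thresholds $G_{\vec t}=\langle n,m,p,\vec t\rangle$, $\vec t\in[0,1]^m$: player $i$'s document is eligible for $q_j$ iff $d_i^j\ge\vec t_j$; among eligible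 player documents those of highest score win $q_j$ (uniform sharing); if none is eligible, no player wins $q_j$. In either game, a pure equilibrium is a pure Nash equilibrium (no player can strictly increase her utility by unilaterally changing her document) in which every query is won by at least one player. *)

theory Defs
  imports Complex_Main
begin

text \<open>Queries are indexed by j < m, players by i < n. A document is a function
  nat => real; it lives in D when its first m coordinates are in [0,1] with sum at most 1
  and all other coordinates are 0.\<close>

definition docs :: "nat \<Rightarrow> (nat \<Rightarrow> real) set" where
  "docs m = {d. (\<forall>j<m. 0 \<le> d j \<and> d j \<le> 1) \<and> (\<forall>j\<ge>m. d j = 0) \<and> (\<Sum>j<m. d j) \<le> 1}"

definition single_peaked :: "(real \<Rightarrow> real) \<Rightarrow> real \<Rightarrow> bool" where
  "single_peaked f p \<longleftrightarrow>
     f ` {0..1} \<subseteq> {0..1} \<and>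
     p \<in> {0..1} \<and> mono_on {0..p} f \<and> antimono_on {p..1} f \<and>
     (\<forall>q\<in>{0..1}. mono_on {0..q} f \<and> antimono_on {q..1} f \<longrightarrow> q = p)"

definition winners ::
  "nat \<Rightarrow> (real \<Rightarrow> real) \<Rightarrow> ((nat \<Rightarrow> real) \<Rightarrow> nat \<Rightarrow> bool) \<Rightarrow> (nat \<Rightarrow> nat \<Rightarrow> real) \<Rightarrow> nat \<Rightarrow> nat set" where
  "winners n f elig s j =
     {i. i < n \<and> elig (s i) j \<and> (\<forall>k<n. elig (s k) j \<longrightarrow> f (s k j) \<le> f (s i j))}"

definition utility ::
  "nat \<Rightarrow> nat \<Rightarrow> (real \<Rightarrow> real) \<Rightarrow> ((nat \<Rightarrow> real) \<Rightarrow> nat \<Rightarrow> bool) \<Rightarrow> (nat \<Rightarrow> nat \<Rightarrow> real) \<Rightarrow> nat \<Rightarrow> real" where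
  "utility n m f elig s i =
     (\<Sum>j<m. if i \<in> winners n f elig s j then 1 / real (card (winners n f elig s j)) else 0)"

definition pure_equilibrium ::
  "nat \<Rightarrow> nat \<Rightarrow> (real \<Rightarrow> real) \<Rightarrow> ((nat \<Rightarrow> real) \<Rightarrow> nat \<Rightarrow> bool) \<Rightarrow> (nat \<Rightarrow> nat \<Rightarrow> real) \<Rightarrow> bool" where
  "pure_equilibrium n m f elig s \<longleftrightarrow>
     (\<forall>i<n. s i \<in> docs m) \<and>
     (\<forall>i<n. \<forall>d\<in>docs m. utility n m f elig (s(i := d)) i \<le> utility n m f elig s i) \<and>
     (\<forall>j<m. winners n f elig s j \<noteq> {})"

text \<open>Corpus-enriched game G_T: a player document is eligible for q_j iff its score is at
  least the score of every static document (ties favour players).\<close>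

definition corpus_elig :: "(real \<Rightarrow> real) \<Rightarrow> (nat \<Rightarrow> real) set \<Rightarrow> (nat \<Rightarrow> real) \<Rightarrow> nat \<Rightarrow> bool" where
  "corpus_elig f T d j \<longleftrightarrow> (\<forall>e\<in>T. f (e j) \<le> f (d j))"

definition corpus_game_has_pure_eq :: "nat \<Rightarrow> nat \<Rightarrow> (real \<Rightarrow> real) \<Rightarrow> (nat \<Rightarrow> real) set \<Rightarrow> bool" where
  "corpus_game_has_pure_eq n m f T \<longleftrightarrow> (\<exists>s. pure_equilibrium n m f (corpus_elig f T) s)"

definition thresh_elig :: "(nat \<Rightarrow> real) \<Rightarrow> (nat \<Rightarrow> real) \<Rightarrow> nat \<Rightarrow> bool" where
  "thresh_elig t d j \<longleftrightarrow> t j \<le> d j"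

definition threshold_game_has_pure_eq :: "nat \<Rightarrow> nat \<Rightarrow> (real \<Rightarrow> real) \<Rightarrow> (nat \<Rightarrow> real) \<Rightarrow> bool" where
  "threshold_game_has_pure_eq n m f t \<longleftrightarrow> (\<exists>s. pure_equilibrium n m f (thresh_elig t) s)"

end

theory Submission
  imports Defs
begin

text \<open>Given a pure equilibrium s of G_T, let t_j be the least point of [0, p], among finitely
  many candidates (coordinates of the players' and static documents, 0 and p), whose score is at
  least that of every static document on q_j. Every corpus-eligible document of s then passes
  the threshold, so s has the same winners in G_t. A deviation d in G_t is matched in G_T by d
  capped at the peak p: capping keeps d in D, does not lower any score and beats the static
  documents wherever d passed the threshold, while the set of co-winners can only shrink.
  Finally t_j is at most the j-th coordinate of the best static document for q_j, so the
  thresholds sum to at most the total mass of T, which is at most |T|.\<close>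

lemma single_peaked_le_peak:
  assumes "single_peaked f p" and "x \<in> {0..1}"
  shows "f x \<le> f p"
proof -
  have p: "p \<in> {0..1}" "mono_on {0..p} f" "antimono_on {p..1} f"
    using assms(1) unfolding single_peaked_def by auto
  show ?thesis
  proof (cases "x \<le> p")
    case True
    then show ?thesis using p assms(2) by (auto intro: mono_onD)
  next
    case False
    then show ?thesis using p(1,3) assms(2) unfolding monotone_on_def by auto
  qed
qed

lemma finite_winners: "finite (winners n f elig s j)"
  unfolding winners_def by auto

lemma share_le:
  assumes "finite B" and "i \<in> B \<Longrightarrow> i \<in> A \<and> A \<subseteq> B"
  shows "(if i \<in> B then 1 / real (card B) else 0) \<le> (if i \<in> A then 1 / real (card A) else 0)"
proof (cases "i \<in> B")
  case True
  then have "i \<in> A" "A \<subseteq> B" using assms(2) by auto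
  moreover from this have "finite A" using assms(1) finite_subset by blast
  ultimately have "card A \<le> card B" "0 < card A"
    using assms(1) by (auto simp: card_mono card_gt_0_iff)
  then show ?thesis using True \<open>i \<in> A\<close> by (simp add: frac_le)
qed simp

lemma utility_le_if_winners_shrink:
  assumes "\<And>j. j < m \<Longrightarrow> i \<in> winners n f E s j \<Longrightarrow>
             i \<in> winners n f E' s' j \<and> winners n f E' s' j \<subseteq> winners n f E s j"
  shows "utility n m f E s i \<le> utility n m f E' s' i"
  unfolding utility_def using assms by (intro sum_mono share_le finite_winners) auto

lemma winners_improved_deviation:
  assumes "i < n" and win: "i \<in> winners n f E (s(i := d)) j"
    and "E' d' j" and better: "f (d j) \<le> f (d' j)"
    and others: "\<And>k. k < n \<Longrightarrow> k \<noteq> i \<Longrightarrow> E' (s k) j \<Longrightarrow> E (s k) j"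
  shows "i \<in> winners n f E' (s(i := d')) j \<and>
         winners n f E' (s(i := d')) j \<subseteq> winners n f E (s(i := d)) j"
proof -
  have "\<forall>k<n. E ((s(i := d)) k) j \<longrightarrow> f ((s(i := d)) k j) \<le> f (d j)"
    using win unfolding winners_def by simp
  then have top: "f (s k j) \<le> f (d j)" if "k < n" "k \<noteq> i" "E (s k) j" for k
    using that by (metis fun_upd_other)
  have top': "f (s k j) \<le> f (d' j)" if "k < n" "k \<noteq> i" "E' (s k) j" for k
    using top[OF that(1,2) others[OF that]] better by linarith
  have "i \<in> winners n f E' (s(i := d')) j"
    unfolding winners_def using \<open>i < n\<close> \<open>E' d' j\<close> top' by auto
  moreover have "k \<in> winners n f E (s(i := d)) j"
    if k: "k \<in> winners n f E' (s(i := d')) j" and "k \<noteq> i" for k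
  proof -
    have "k < n" "E' (s k) j" "f (d' j) \<le> f (s k j)"
      using k \<open>k \<noteq> i\<close> \<open>i < n\<close> \<open>E' d' j\<close> unfolding winners_def by auto
    then have "E (s k) j" "f (s k j) = f (d j)"
      using top[of k] others[of k] \<open>k \<noteq> i\<close> better by auto
    then show ?thesis using win \<open>k < n\<close> \<open>k \<noteq> i\<close> unfolding winners_def by auto
  qed
  ultimately show ?thesis using win by blast
qed

lemma winners_thresh_eq_corpus:
  assumes "winners n f (corpus_elig f T) s j \<noteq> {}"
    and pass: "\<And>k. k < n \<Longrightarrow> corpus_elig f T (s k) j \<Longrightarrow> thresh_elig t (s k) j"
  shows "winners n f (thresh_elig t) s j = winners n f (corpus_elig f T) s j"
proof -
  obtain w where w: "w \<in> winners n f (corpus_elig f T) s j" using assms(1) by blast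
  then have "w < n" "corpus_elig f T (s w) j" unfolding winners_def by auto
  have up: "corpus_elig f T (s k) j" if "f (s w j) \<le> f (s k j)" for k
    using \<open>corpus_elig f T (s w) j\<close> that unfolding corpus_elig_def by force
  have top: "f (s k j) \<le> f (s w j)" if "k < n" for k
    using up[of k] w that unfolding winners_def by (cases "f (s k j) \<le> f (s w j)") auto
  have top_scorers: "winners n f E s j = {k. k < n \<and> f (s k j) = f (s w j)}"
    if w_elig: "E (s w) j" and up_elig: "\<And>k. k < n \<Longrightarrow> f (s w j) \<le> f (s k j) \<Longrightarrow> E (s k) j"
    for E
  proof (intro set_eqI iffI)
    fix k assume "k \<in> winners n f E s j"
    then show "k \<in> {k. k < n \<and> f (s k j) = f (s w j)}"
      using w_elig \<open>w < n\<close> top[of k] unfolding winners_def by fastforce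
  next
    fix k assume "k \<in> {k. k < n \<and> f (s k j) = f (s w j)}"
    then show "k \<in> winners n f E s j"
      using up_elig[of k] top unfolding winners_def by auto
  qed
  have "winners n f (thresh_elig t) s j = {k. k < n \<and> f (s k j) = f (s w j)}"
    using \<open>w < n\<close> \<open>corpus_elig f T (s w) j\<close> up pass
    by (intro top_scorers[of "thresh_elig t"]) blast+
  moreover have "winners n f (corpus_elig f T) s j = {k. k < n \<and> f (s k j) = f (s w j)}"
    using \<open>corpus_elig f T (s w) j\<close> up
    by (intro top_scorers[of "corpus_elig f T"])
  ultimately show ?thesis by simp
qed

lemma capped_in_docs:
  assumes "d \<in> docs m" and "0 \<le> p"
  shows "(\<lambda>j. min (d j) p) \<in> docs m"
proof -
  have "(\<Sum>j<m. min (d j) p) \<le> (\<Sum>j<m. d j)" by (intro sum_mono) auto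
  then show ?thesis using assms unfolding docs_def by auto
qed

lemma corpus_elig_capped:
  assumes sp: "single_peaked f p" and "T \<subseteq> docs m" and "j < m" and "d j \<in> {0..1}"
    and t: "0 \<le> t j" "t j \<le> p" "corpus_elig f T t j" and "thresh_elig t d j"
  shows "corpus_elig f T (\<lambda>j. min (d j) p) j"
  unfolding corpus_elig_def
proof
  fix e assume "e \<in> T"
  show "f (e j) \<le> f (min (d j) p)"
  proof (cases "d j \<le> p")
    case True
    have "mono_on {0..p} f" using sp unfolding single_peaked_def by auto
    then have "f (t j) \<le> f (d j)" using t True \<open>thresh_elig t d j\<close>
      unfolding thresh_elig_def by (auto intro: mono_onD)
    then show ?thesis using t(3) \<open>e \<in> T\<close> True unfolding corpus_elig_def by force
  next
    case False
    have "e j \<in> {0..1}" using \<open>e \<in> T\<close> assms(2,3) unfolding docs_def by auto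
    then show ?thesis using False single_peaked_le_peak[OF sp] by simp
  qed
qed

lemma pure_equilibrium_thresh_of_corpus:
  assumes sp: "single_peaked f p" and T: "T \<subseteq> docs m"
    and eq: "pure_equilibrium n m f (corpus_elig f T) s"
    and t: "\<And>j. j < m \<Longrightarrow> 0 \<le> t j \<and> t j \<le> p \<and> corpus_elig f T t j"
    and pass: "\<And>j k. j < m \<Longrightarrow> k < n \<Longrightarrow> corpus_elig f T (s k) j \<Longrightarrow> thresh_elig t (s k) j"
  shows "pure_equilibrium n m f (thresh_elig t) s"
proof -
  have p: "0 \<le> p" using sp unfolding single_peaked_def by auto
  have same: "winners n f (thresh_elig t) s j = winners n f (corpus_elig f T) s j" if "j < m" for j
    using eq pass that by (intro winners_thresh_eq_corpus) (auto simp: pure_equilibrium_def)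
  have "utility n m f (thresh_elig t) (s(i := d)) i \<le> utility n m f (thresh_elig t) s i"
    if i: "i < n" and d: "d \<in> docs m" for i d
  proof -
    define d' where "d' = (\<lambda>j. min (d j) p)"
    have "utility n m f (thresh_elig t) (s(i := d)) i \<le> utility n m f (corpus_elig f T) (s(i := d')) i"
    proof (rule utility_le_if_winners_shrink)
      fix j assume j: "j < m" and win: "i \<in> winners n f (thresh_elig t) (s(i := d)) j"
      have dj: "d j \<in> {0..1}" using d j unfolding docs_def by auto
      show "i \<in> winners n f (corpus_elig f T) (s(i := d')) j \<and>
            winners n f (corpus_elig f T) (s(i := d')) j \<subseteq> winners n f (thresh_elig t) (s(i := d)) j"
      proof (rule winners_improved_deviation[OF i win])
        show "corpus_elig f T d' j"
          using corpus_elig_capped[where d = d and t = t, OF sp T j dj] t[OF j] win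
          unfolding d'_def winners_def by auto
        show "f (d j) \<le> f (d' j)"
          using dj single_peaked_le_peak[OF sp] unfolding d'_def by (cases "d j \<le> p") auto
      qed (use pass j in auto)
    qed
    also have "\<dots> \<le> utility n m f (corpus_elig f T) s i"
      using eq i capped_in_docs[OF d p] unfolding pure_equilibrium_def d'_def by blast
    also have "\<dots> \<le> utility n m f (thresh_elig t) s i"
      using same by (intro utility_le_if_winners_shrink) auto
    finally show ?thesis .
  qed
  then show ?thesis using eq same unfolding pure_equilibrium_def by auto
qed

text \<open>The minimum is taken over finitely many candidates because f need not be continuous:
  the set of points of [0, p] scoring at least every y \<in> Y need not have a least element.\<close>

definition least_dominating :: "(real \<Rightarrow> real) \<Rightarrow> real \<Rightarrow> real set \<Rightarrow> real set \<Rightarrow> real" where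
  "least_dominating f p Y X = Min (insert p X \<inter> {x. 0 \<le> x \<and> x \<le> p \<and> (\<forall>y\<in>Y. f y \<le> f x)})"

lemma least_dominating_spec:
  assumes "finite X" and "0 \<le> p" and "\<forall>y\<in>Y. f y \<le> f p"
  defines "t \<equiv> least_dominating f p Y X"
  shows "0 \<le> t" "t \<le> p" "\<forall>y\<in>Y. f y \<le> f t"
    and "\<And>x. x \<in> X \<Longrightarrow> 0 \<le> x \<Longrightarrow> \<forall>y\<in>Y. f y \<le> f x \<Longrightarrow> t \<le> x"
proof -
  let ?C = "insert p X \<inter> {x. 0 \<le> x \<and> x \<le> p \<and> (\<forall>y\<in>Y. f y \<le> f x)}"
  have C: "finite ?C" "p \<in> ?C" using assms by auto
  have "t \<in> ?C" unfolding t_def least_dominating_def using C by (intro Min_in) auto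
  then show "0 \<le> t" "t \<le> p" "\<forall>y\<in>Y. f y \<le> f t" by auto
  have least: "t \<le> x" if "x \<in> ?C" for x
    unfolding t_def least_dominating_def using C that by auto
  show "t \<le> x" if "x \<in> X" "0 \<le> x" "\<forall>y\<in>Y. f y \<le> f x" for x
    using least[of x] least[OF C(2)] that by (cases "x \<le> p") auto
qed

lemma sum_coords_le_card:
  assumes "T \<subseteq> docs m" and "finite T"
  shows "(\<Sum>j<m. \<Sum>e\<in>T. e j) \<le> real (card T)"
proof -
  have "(\<Sum>j<m. \<Sum>e\<in>T. e j) = (\<Sum>e\<in>T. \<Sum>j<m. e j)" by (rule sum.swap)
  also have "\<dots> \<le> (\<Sum>e\<in>T. 1)" using assms(1) unfolding docs_def by (intro sum_mono) auto
  finally show ?thesis by simp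
qed

lemma corpus_threshold:
  fixes n :: nat
  assumes sp: "single_peaked f p" and T: "T \<subseteq> docs m" "finite T" and "j < m"
    and s: "\<forall>k<n. s k \<in> docs m"
  defines "\<tau> \<equiv> least_dominating f p ((\<lambda>e. e j) ` T)
                   (insert 0 ((\<lambda>k. s k j) ` {..<n} \<union> (\<lambda>e. e j) ` T))"
  shows "0 \<le> \<tau>" "\<tau> \<le> p" "\<forall>e\<in>T. f (e j) \<le> f \<tau>"
    and "\<And>k. k < n \<Longrightarrow> corpus_elig f T (s k) j \<Longrightarrow> \<tau> \<le> s k j"
    and "\<tau> \<le> (\<Sum>e\<in>T. e j)"
proof -
  have coord: "e j \<in> {0..1}" if "e \<in> T" for e using that T \<open>j < m\<close> unfolding docs_def by auto
  have fin: "finite (insert 0 ((\<lambda>k. s k j) ` {..<n} \<union> (\<lambda>e. e j) ` T))" using T(2) by auto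
  have p: "0 \<le> p" using sp unfolding single_peaked_def by auto
  have peak: "\<forall>y\<in>(\<lambda>e. e j) ` T. f y \<le> f p" using coord single_peaked_le_peak[OF sp] by auto
  note ld = least_dominating_spec[OF fin p peak, folded \<tau>_def]
  show "0 \<le> \<tau>" "\<tau> \<le> p" "\<forall>e\<in>T. f (e j) \<le> f \<tau>" using ld(1-3) by auto
  show "\<tau> \<le> s k j" if "k < n" "corpus_elig f T (s k) j" for k
    using ld(4)[of "s k j"] that s \<open>j < m\<close> T(2) unfolding corpus_elig_def docs_def by auto
  show "\<tau> \<le> (\<Sum>e\<in>T. e j)"
  proof (cases "T = {}")
    case True
    \<comment> \<open>this is why 0 is among the candidates\<close>
    then show ?thesis using ld(4)[of 0] T(2) by simp
  next
    case False
    obtain e0 where e0: "e0 \<in> T" "Max ((\<lambda>e. f (e j)) ` T) = f (e0 j)"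
      using obtains_MAX[OF T(2) False] by metis
    have "f (e j) \<le> f (e0 j)" if "e \<in> T" for e
      using e0(2) T(2) that by (metis Max_ge finite_imageI image_eqI)
    then have "\<tau> \<le> e0 j" using ld(4)[of "e0 j"] T(2) e0(1) coord by auto
    also have "\<dots> \<le> (\<Sum>e\<in>T. e j)" using T(2) e0(1) coord by (intro member_le_sum) auto
    finally show ?thesis .
  qed
qed

theorem lemma1:
  fixes n m \<eta> :: nat and p :: real and f :: "real \<Rightarrow> real"
  assumes "0 < p" and "p \<le> 1"
    and "single_peaked f p"
    and "\<exists>T. T \<subseteq> docs m \<and> finite T \<and> card T = \<eta> \<and> corpus_game_has_pure_eq n m f T"
  shows "\<exists>t :: nat \<Rightarrow> real. (\<forall>j<m. 0 \<le> t j \<and> t j \<le> 1) \<and> (\<forall>j\<ge>m. t j = 0) \<and>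
           (\<Sum>j<m. t j) \<le> real \<eta> \<and> threshold_game_has_pure_eq n m f t"
proof -
  obtain T s where T: "T \<subseteq> docs m" "finite T" "card T = \<eta>"
    and eq: "pure_equilibrium n m f (corpus_elig f T) s"
    using assms(4) unfolding corpus_game_has_pure_eq_def by blast
  have s: "\<forall>k<n. s k \<in> docs m" using eq unfolding pure_equilibrium_def by blast
  define t where "t j = (if j < m then least_dominating f p ((\<lambda>e. e j) ` T)
                   (insert 0 ((\<lambda>k. s k j) ` {..<n} \<union> (\<lambda>e. e j) ` T)) else 0)" for j
  have thr: "0 \<le> t j" "t j \<le> p" "\<forall>e\<in>T. f (e j) \<le> f (t j)"
    "\<And>k. k < n \<Longrightarrow> corpus_elig f T (s k) j \<Longrightarrow> t j \<le> s k j" "t j \<le> (\<Sum>e\<in>T. e j)"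
    if "j < m" for j
    using corpus_threshold[OF assms(3) T(1,2) that s] that unfolding t_def by auto
  have "(\<Sum>j<m. t j) \<le> (\<Sum>j<m. \<Sum>e\<in>T. e j)" using thr(5) by (intro sum_mono) auto
  also have "\<dots> \<le> real \<eta>" using sum_coords_le_card[OF T(1,2)] T(3) by simp
  finally have "(\<Sum>j<m. t j) \<le> real \<eta>" .
  moreover have "pure_equilibrium n m f (thresh_elig t) s"
    by (rule pure_equilibrium_thresh_of_corpus[OF assms(3) T(1) eq])
      (use thr in \<open>auto simp: thresh_elig_def corpus_elig_def\<close>)
  moreover have "\<forall>j<m. 0 \<le> t j \<and> t j \<le> 1" using thr(1,2) assms(2) by force
  moreover have "\<forall>j\<ge>m. t j = 0" unfolding t_def by simp
  ultimately show ?thesis unfolding threshold_game_has_pure_eq_def by blast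
qed

end
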